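(* Let $X$ and $\Sigma$ be finite alphabets, let $A$ be a $P(X)$-automaton over $\Sigma$ with state set $Q$ accepting the language $L \subseteq \Sigma^*$, each of whose edges is labelled by a pair $(y, a)$ with $y \in \{\epsilon\} \cup X \cup \{x^{-1} : x \in X\}$ and $a \in \Sigma \cup \{\epsilon\}$. Let $\#$ be a new symbol not in $X$, put $X^\# = X \cup \{\#\}$, and let $A'$ be the finite automaton with edges labelled by elements of $(\overline{X^\#})^* \times \Sigma^*$ constructed as follows: its state set is $Q_+ \cup Q_-$, where $Q_+ = \{q_+ : q \in Q\}$ and $Q_- = \{q_- : q \in Q\}$ are disjoint copies of $Q$; its start state is $q_+$ where $q$ is the start state of $A$; its final states are the $q_-$ with $q$ a final state of $A$; it has an edge from $p_+$ to $q_+$ labelled $(x\#, a)$ whenever $A$ has an edge from $p$ to $q$ labelled $(x,a)$ with $x \in X$; an edge from $p_-$ to $q_+$ labelled $(x^{-1}\#, a)$ whenever $A$ has an edge from $p$ to $q$ labelled $(x^{-1}, a)$ with $x \in X$; an edge from $p_+$ to $q_+$ labelled $(\epsilon, a)$ whenever $A$ has an edge from $p$ to $q$ labelled $(\epsilon, a)$; for each $q \in Q$ an edge from $q_+$ to $q_-$ labelled $(\epsilon,\epsilon)$; and for each $q \in Q$ a loop at $q_-$ labelled $(\#^{-1}, \epsilon)$. Then $A'$, interpreted as a free group automaton (i.e. an $F(X^\#)$-automaton, first components read in $F(X^\#)$), accepts exactly $L$, and $A'$, interpreted as a polycyclic monoid automaton (a $P(X^\#)$-automaton), also accepts exactly 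$L$.
   Context: For a monoid $M$ with identity $1$ and a finite alphabet $\Sigma$, an $M$-automaton over $\Sigma$ is a finite directed graph whose edges are labelled by elements of $M \times \Sigma^*$, with an initial vertex and a set of terminal vertices; a word $w \in \Sigma^*$ is accepted if some path from the initial vertex to a terminal vertex has label (product of edge labels in $M \times \Sigma^*$) equal to $(1,w)$. For an alphabet $Y$, $\overline{Y} = \{y, y^{-1} : y \in Y\}$; letters of $Y$ are positive generators and letters $y^{-1}$ negative generators. The polycyclic monoid $P(Y)$ is the monoid of partial functions on $Y^*$ (composed left to right: $fg$ means apply $f$ then $g$) generated by $y: w \mapsto wy$ (defined everywhere) and $y^{-1}: wy \mapsto w$ (defined on $Y^*y$), $y \in Y$; a word over $\overline{Y}$ thus represents an element of $P(Y)$, and $\epsilon$ represents the identity. $F(Y)$ is the free group on $Y$, with presentation $\langle \overline{Y} \mid yy^{-1} = y^{-1}y = 1 \ (y \in Y)\rangle$. A word $u \in \overline{Y}^*$ labelling an edge is interpreted as the element of $P(Y)$ or $F(Y)$ it represents. *)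

theory Defs
  imports Main
begin

datatype 'y gen = Pos 'y | Neg 'y

text \<open>Action of a single generator of the polycyclic monoid P(Y) on \<open>Y\<^sup>*\<close>
  (partial function): \<open>y: w \<mapsto> wy\<close>, \<open>y\<^sup>-\<^sup>1: wy \<mapsto> w\<close>.\<close>
fun pc_gen :: "'y gen \<Rightarrow> 'y list \<Rightarrow> 'y list option" where
  "pc_gen (Pos y) w = Some (w @ [y])"
| "pc_gen (Neg y) w = (if w \<noteq> [] \<and> last w = y then Some (butlast w) else None)"

fun pc_act :: "'y gen list \<Rightarrow> 'y list \<Rightarrow> 'y list option" where
  "pc_act [] w = Some w"
| "pc_act (g # u) w = (case pc_gen g w of None \<Rightarrow> None | Some v \<Rightarrow> pc_act u v)"

text \<open>The word represents the identity element of P(Y).\<close>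
definition pc_one :: "'y gen list \<Rightarrow> bool" where
  "pc_one u \<longleftrightarrow> (\<forall>w. pc_act u w = Some w)"

fun gen_inv :: "'y gen \<Rightarrow> 'y gen" where
  "gen_inv (Pos y) = Neg y"
| "gen_inv (Neg y) = Pos y"

definition fg_step :: "('y gen list \<times> 'y gen list) set" where
  "fg_step = {(xs @ [g, gen_inv g] @ ys, xs @ ys) | xs g ys. True}"

text \<open>The word represents the identity of the free group
  F(Y) = \<open>\<langle>\<overline>Y | yy\<^sup>-\<^sup>1 = y\<^sup>-\<^sup>1y = 1\<rangle>\<close>.\<close>
definition fg_one :: "'y gen list \<Rightarrow> bool" where
  "fg_one u \<longleftrightarrow> (u, []) \<in> (fg_step \<union> fg_step\<inverse>)\<^sup>*"

text \<open>Paths in an automaton whose edges are (source, group word, input word, target);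
  the label of a path is the product of edge labels.\<close>
inductive run :: "('q \<times> 'y gen list \<times> 's list \<times> 'q) set \<Rightarrow> 'q \<Rightarrow> 'y gen list \<Rightarrow> 's list \<Rightarrow> 'q \<Rightarrow> bool"
  for E where
  run_nil: "run E p [] [] p"
| run_cons: "(p, u, a, p') \<in> E \<Longrightarrow> run E p' v w q \<Longrightarrow> run E p (u @ v) (a @ w) q"

text \<open>M-automaton acceptance, where \<open>one\<close> decides whether a word over the generators
  represents the identity of M.\<close>
definition accepts :: "('y gen list \<Rightarrow> bool) \<Rightarrow> ('q \<times> 'y gen list \<times> 's list \<times> 'q) set
    \<Rightarrow> 'q \<Rightarrow> 'q set \<Rightarrow> 's list \<Rightarrow> bool" where
  "accepts one E q0 F w \<longleftrightarrow> (\<exists>u q. q \<in> F \<and> run E q0 u w q \<and> one u)"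

text \<open>The construction of A'. States: (q, True) = q+, (q, False) = q-.
  Generators of X^#: Some x = x, None = #.\<close>
definition sharp_edges :: "'q set \<Rightarrow> ('q \<times> 'x gen list \<times> 's list \<times> 'q) set
    \<Rightarrow> (('q \<times> bool) \<times> 'x option gen list \<times> 's list \<times> ('q \<times> bool)) set" where
  "sharp_edges Q E =
     {((p, True), [Pos (Some x), Pos None], a, (q, True)) | p x a q. (p, [Pos x], a, q) \<in> E}
   \<union> {((p, False), [Neg (Some x), Pos None], a, (q, True)) | p x a q. (p, [Neg x], a, q) \<in> E}
   \<union> {((p, True), [], a, (q, True)) | p a q. (p, [], a, q) \<in> E}
   \<union> {((q, True), [], [], (q, False)) | q. q \<in> Q}
   \<union> {((q, False), [Neg None], [], (q, False)) | q. q \<in> Q}"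

definition sharp_init :: "'q \<Rightarrow> 'q \<times> bool" where
  "sharp_init q0 = (q0, True)"

definition sharp_finals :: "'q set \<Rightarrow> ('q \<times> bool) set" where
  "sharp_finals F = {(q, False) | q. q \<in> F}"

end

theory Submission
  imports Defs
begin

text \<open>
  A' simulates A as a P(X^#)-automaton: it keeps the stack of A with a \<open>#\<close> pushed after every
  letter, and to pop a letter x it first moves to the \<open>-\<close> copy, pops the \<open>#\<close>s on top,
  and then reads \<open>x\<^sup>-\<^sup>1#\<close>. Hence L is contained in the language of A' over P(X^#),
  which is contained in its language over F(X^#).

  Conversely, follow the free reduction of the label of a run of A' whose label is trivial
  in F(X^#). While it is a positive word, it is a stack of P(X^#) and A' moves like A on the
  stack with the \<open>#\<close>s erased. Once a negative letter appears in it, that letter is never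
  cancelled again (see \<open>blocked\<close>), so the label would not be trivial.
\<close>

section \<open>Free reduction\<close>

definition reduce_snoc :: "'y gen \<Rightarrow> 'y gen list \<Rightarrow> 'y gen list" where
  "reduce_snoc g r = (if r \<noteq> [] \<and> last r = gen_inv g then butlast r else r @ [g])"

definition reduce_append :: "'y gen list \<Rightarrow> 'y gen list \<Rightarrow> 'y gen list" where
  "reduce_append r u = foldl (\<lambda>r g. reduce_snoc g r) r u"

lemma reduce_append_Nil [simp]: "reduce_append r [] = r"
  by (simp add: reduce_append_def)

lemma reduce_append_Cons [simp]: "reduce_append r (g # u) = reduce_append (reduce_snoc g r) u"
  by (simp add: reduce_append_def)

lemma reduce_append_append: "reduce_append r (u @ v) = reduce_append (reduce_append r u) v"
  by (simp add: reduce_append_def)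

lemma reduce_snoc_cancel [simp]: "reduce_snoc g (r @ [gen_inv g]) = r"
  by (simp add: reduce_snoc_def)

lemma reduce_snoc_no_cancel: "r = [] \<or> last r \<noteq> gen_inv g \<Longrightarrow> reduce_snoc g r = r @ [g]"
  by (auto simp: reduce_snoc_def)

lemma reduce_snoc_Pos_map_Pos: "reduce_snoc (Pos c) (map Pos t) = map Pos (t @ [c])"
  by (cases t rule: rev_cases) (simp_all add: reduce_snoc_def)

lemma reduce_snoc_Neg_map_Pos:
  "reduce_snoc (Neg c) (map Pos t)
    = (if t \<noteq> [] \<and> last t = c then map Pos (butlast t) else map Pos t @ [Neg c])"
  by (auto simp: reduce_snoc_def last_map map_butlast)

definition reduced :: "'y gen list \<Rightarrow> bool" where
  "reduced r \<longleftrightarrow> \<not> (\<exists>xs g ys. r = xs @ [g, gen_inv g] @ ys)"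

lemma gen_inv_gen_inv [simp]: "gen_inv (gen_inv g) = g"
  by (cases g) auto

lemma reduced_Nil [simp]: "reduced []"
  by (simp add: reduced_def)

lemma reduced_butlast: "reduced r \<Longrightarrow> reduced (butlast r)"
  unfolding reduced_def by (metis append.assoc append_butlast_last_id butlast.simps(1))

lemma reduced_snoc:
  assumes "reduced r" and "\<not> (r \<noteq> [] \<and> last r = gen_inv g)"
  shows "reduced (r @ [g])"
  unfolding reduced_def
proof
  assume "\<exists>xs h ys. r @ [g] = xs @ [h, gen_inv h] @ ys"
  then obtain xs h ys where eq: "r @ [g] = xs @ [h, gen_inv h] @ ys" by blast
  show False
  proof (cases ys rule: rev_cases)
    case Nil
    with eq have "r = xs @ [h]" and "g = gen_inv h" by auto
    with assms(2) show False by simp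
  next
    case (snoc ys' c)
    with eq have "r = xs @ [h, gen_inv h] @ ys'" by simp
    with assms(1) show False unfolding reduced_def by blast
  qed
qed

lemma reduced_reduce_snoc: "reduced r \<Longrightarrow> reduced (reduce_snoc g r)"
  unfolding reduce_snoc_def using reduced_butlast reduced_snoc[of r g] by auto

lemma reduced_reduce_append: "reduced r \<Longrightarrow> reduced (reduce_append r u)"
  by (induction u arbitrary: r) (auto simp: reduced_reduce_snoc)

lemma reduce_snoc_gen_inv:
  assumes "reduced r"
  shows "reduce_snoc (gen_inv g) (reduce_snoc g r) = r"
proof (cases "r \<noteq> [] \<and> last r = gen_inv g")
  case True
  then obtain r0 where r: "r = r0 @ [gen_inv g]"
    by (metis append_butlast_last_id)
  have "\<not> (r0 \<noteq> [] \<and> last r0 = g)"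
  proof
    assume "r0 \<noteq> [] \<and> last r0 = g"
    then have "r = butlast r0 @ [g, gen_inv g] @ []"
      using r by (metis append.assoc append_Cons append_Nil append_butlast_last_id)
    with assms show False unfolding reduced_def by blast
  qed
  with r show ?thesis by (auto simp: reduce_snoc_def)
qed (auto simp: reduce_snoc_def)

lemma reduce_append_fg_step:
  "reduced r \<Longrightarrow> (u, v) \<in> fg_step \<Longrightarrow> reduce_append r u = reduce_append r v"
  unfolding fg_step_def
  by (auto simp: reduce_append_append reduce_snoc_gen_inv reduced_reduce_append)

lemma reduce_append_fg_equiv:
  assumes "(u, v) \<in> (fg_step \<union> fg_step\<inverse>)\<^sup>*"
  shows "reduce_append [] u = reduce_append [] v"
  using assms
proof (induction rule: rtrancl_induct)
  case (step v w)
  then have "(v, w) \<in> fg_step \<or> (w, v) \<in> fg_step" by blast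
  then have "reduce_append [] v = reduce_append [] w"
    using reduce_append_fg_step[OF reduced_Nil] by metis
  with step.IH show ?case by simp
qed simp

lemma fg_one_reduce_append: "fg_one u \<Longrightarrow> reduce_append [] u = []"
  unfolding fg_one_def by (drule reduce_append_fg_equiv) simp

section \<open>The polycyclic monoid\<close>

lemma pc_act_append:
  "pc_act (u @ v) w = (case pc_act u w of None \<Rightarrow> None | Some w' \<Rightarrow> pc_act v w')"
  by (induction u arbitrary: w) (auto split: option.split)

lemma pc_act_prepend: "pc_act u w = Some v \<Longrightarrow> pc_act u (z @ w) = Some (z @ v)"
proof (induction u arbitrary: w)
  case (Cons g u)
  then show ?case
    by (cases g) (auto split: if_splits simp: butlast_append)
qed simp

lemma pc_one_iff: "pc_one u \<longleftrightarrow> pc_act u [] = Some []"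
  unfolding pc_one_def using pc_act_prepend[of u "[]" "[]"] by auto

lemma pc_act_fg_steps: "pc_act u w = Some v \<Longrightarrow> (map Pos w @ u, map Pos v) \<in> fg_step\<^sup>*"
proof (induction u arbitrary: w)
  case (Cons g u)
  show ?case
  proof (cases g)
    case (Pos y)
    then show ?thesis using Cons.IH[of "w @ [y]"] Cons.prems by simp
  next
    case (Neg y)
    with Cons.prems have "w \<noteq> []" "last w = y" and u: "pc_act u (butlast w) = Some v"
      by (auto split: if_splits)
    then have "map Pos w = map Pos (butlast w) @ [Pos y]"
      by (metis append_butlast_last_id list.simps(8,9) map_append)
    then have "map Pos w @ g # u = map Pos (butlast w) @ [Pos y, gen_inv (Pos y)] @ u"
      using Neg by simp
    then have "(map Pos w @ g # u, map Pos (butlast w) @ u) \<in> fg_step"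
      unfolding fg_step_def by blast
    with Cons.IH[OF u] show ?thesis
      by (meson converse_rtrancl_into_rtrancl)
  qed
qed simp

lemma pc_one_imp_fg_one: "pc_one u \<Longrightarrow> fg_one u"
proof -
  assume "pc_one u"
  then have "(u, []) \<in> fg_step\<^sup>*"
    using pc_act_fg_steps[of u "[]" "[]"] unfolding pc_one_iff by simp
  then show "fg_one u"
    unfolding fg_one_def by (rule rtrancl_mono[THEN subsetD, rotated]) blast
qed

fun strip_sharp :: "'x option list \<Rightarrow> 'x list" where
  "strip_sharp [] = []"
| "strip_sharp (None # t) = strip_sharp t"
| "strip_sharp (Some x # t) = x # strip_sharp t"

lemma strip_sharp_append [simp]: "strip_sharp (t @ t') = strip_sharp t @ strip_sharp t'"
  by (induction t rule: strip_sharp.induct) auto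

lemma strip_sharp_eq_Nil: "strip_sharp z = [] \<Longrightarrow> z = replicate (length z) None"
  by (induction z rule: strip_sharp.induct) auto

lemma strip_sharp_eq_snoc:
  "strip_sharp z = s @ [x] \<Longrightarrow> \<exists>z0 k. z = z0 @ Some x # replicate k None \<and> strip_sharp z0 = s"
proof (induction z arbitrary: s rule: rev_induct)
  case (snoc c z)
  show ?case
  proof (cases c)
    case None
    with snoc obtain z0 k where "z = z0 @ Some x # replicate k None" "strip_sharp z0 = s"
      by auto
    with None show ?thesis
      by (intro exI[of _ z0] exI[of _ "Suc k"]) (simp add: replicate_append_same[symmetric])
  next
    case (Some y)
    with snoc.prems show ?thesis
      by (intro exI[of _ z] exI[of _ 0]) simp
  qed
qed simp

lemma pc_act_pop_sharps: "pc_act (replicate k (Neg None)) (y @ replicate k None) = Some y"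
proof (induction k)
  case (Suc k)
  have "y @ replicate (Suc k) None = (y @ replicate k None) @ [None]"
    by (simp add: replicate_append_same[symmetric])
  with Suc show ?case by (simp del: append_assoc)
qed simp

lemma run_single: "(p, u, a, q) \<in> E \<Longrightarrow> run E p u a q"
  using run_cons[OF _ run_nil, of p u a q E] by simp

lemma run_append: "run E p u a q \<Longrightarrow> run E q v b r \<Longrightarrow> run E p (u @ v) (a @ b) r"
proof (induction rule: run.induct)
  case (run_cons p u a p' v w q)
  show ?case using run.run_cons[OF run_cons.hyps(1) run_cons.IH[OF run_cons.prems]] by simp
qed simp

lemma accepts_mono: "one \<le> one' \<Longrightarrow> accepts one E q0 F w \<Longrightarrow> accepts one' E q0 F w"
  unfolding accepts_def by (meson predicate1D)

lemma sharp_edges_cases: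
  assumes "(P, e, a, P') \<in> sharp_edges Q E"
  obtains (push) p x q where "P = (p, True)" "e = [Pos (Some x), Pos None]" "P' = (q, True)"
      "(p, [Pos x], a, q) \<in> E"
  | (pop) p x q where "P = (p, False)" "e = [Neg (Some x), Pos None]" "P' = (q, True)"
      "(p, [Neg x], a, q) \<in> E"
  | (silent) p q where "P = (p, True)" "e = []" "P' = (q, True)" "(p, [], a, q) \<in> E"
  | (switch) q where "P = (q, True)" "e = []" "a = []" "P' = (q, False)" "q \<in> Q"
  | (pop_sharp) q where "P = (q, False)" "e = [Neg None]" "a = []" "P' = (q, False)" "q \<in> Q"
  using assms unfolding sharp_edges_def by blast

lemma run_sharp_pop_sharps:
  assumes "q \<in> Q"
  shows "run (sharp_edges Q E) (q, False) (replicate k (Neg None)) [] (q, False)"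
proof (induction k)
  case (Suc k)
  have "((q, False), [Neg None], [], (q, False)) \<in> sharp_edges Q E"
    using assms unfolding sharp_edges_def by blast
  from run_cons[OF this Suc] show ?case by simp
qed (simp add: run_nil)

section \<open>A' simulates A\<close>

lemma sharp_simulates_pop:
  assumes "(p, [Neg x], a, q) \<in> E" and "p \<in> Q" and "strip_sharp z = s @ [x]"
  shows "\<exists>u z'. run (sharp_edges Q E) (p, True) u a (q, True) \<and> pc_act u z = Some z'
    \<and> strip_sharp z' = s"
proof -
  obtain z0 k where z: "z = z0 @ Some x # replicate k None" and "strip_sharp z0 = s"
    using strip_sharp_eq_snoc[OF assms(3)] by blast
  let ?u = "[] @ replicate k (Neg None) @ [Neg (Some x), Pos None]"
  have switch: "((p, True), [], [], (p, False)) \<in> sharp_edges Q E"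
    using \<open>p \<in> Q\<close> unfolding sharp_edges_def by blast
  have pop: "((p, False), [Neg (Some x), Pos None], a, (q, True)) \<in> sharp_edges Q E"
    using assms(1) unfolding sharp_edges_def by blast
  have "run (sharp_edges Q E) (p, True) ?u ([] @ [] @ a) (q, True)"
    by (rule run_append[OF run_single[OF switch]
          run_append[OF run_sharp_pop_sharps[OF \<open>p \<in> Q\<close>] run_single[OF pop]]])
  moreover have "pc_act ?u z = Some (z0 @ [None])"
    using pc_act_pop_sharps[of k "z0 @ [Some x]"] z by (simp add: pc_act_append)
  ultimately show ?thesis
    using \<open>strip_sharp z0 = s\<close> by (intro exI[of _ ?u] exI[of _ "z0 @ [None]"]) simp
qed

lemma sharp_simulates_edge:
  assumes "(p, e, a, q) \<in> E" and "p \<in> Q" and "length e \<le> 1"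
    and "pc_act e (strip_sharp z) = Some s"
  shows "\<exists>u z'. run (sharp_edges Q E) (p, True) u a (q, True) \<and> pc_act u z = Some z'
    \<and> strip_sharp z' = s"
proof -
  consider "e = []" | x where "e = [Pos x]" | x where "e = [Neg x]"
  proof -
    have "e = [] \<or> (\<exists>g. e = [g])"
      using \<open>length e \<le> 1\<close> by (cases e) auto
    then show ?thesis using that by (metis gen.exhaust)
  qed
  then show ?thesis
  proof cases
    case 1
    then have "((p, True), [], a, (q, True)) \<in> sharp_edges Q E"
      using assms(1) unfolding sharp_edges_def by blast
    with 1 assms(4) show ?thesis
      by (intro exI[of _ "[]"] exI[of _ z]) (simp add: run_single)
  next
    case (2 x)
    then have "((p, True), [Pos (Some x), Pos None], a, (q, True)) \<in> sharp_edges Q E"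
      using assms(1) unfolding sharp_edges_def by blast
    with 2 assms(4) show ?thesis
      by (intro exI[of _ "[Pos (Some x), Pos None]"] exI[of _ "z @ [Some x, None]"])
        (simp add: run_single)
  next
    case (3 x)
    with assms(4) have "strip_sharp z \<noteq> []" "last (strip_sharp z) = x"
      and "s = butlast (strip_sharp z)"
      by (simp_all split: if_splits)
    then have "strip_sharp z = s @ [x]"
      by (metis append_butlast_last_id)
    with 3 assms(1,2) show ?thesis
      by (intro sharp_simulates_pop) simp_all
  qed
qed

lemma sharp_simulates_run:
  assumes edges: "\<forall>(p, u, a, q) \<in> E. p \<in> Q \<and> length u \<le> 1"
    and "run E p u a q" and "pc_act u (strip_sharp z) = Some s"
  shows "\<exists>u' z'. run (sharp_edges Q E) (p, True) u' a (q, True) \<and> pc_act u' z = Some z'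
    \<and> strip_sharp z' = s"
  using assms(2,3)
proof (induction arbitrary: z rule: run.induct)
  case (run_nil p)
  then show ?case using run.run_nil by fastforce
next
  case (run_cons p e a p1 v w q)
  obtain s1 where e: "pc_act e (strip_sharp z) = Some s1" and v: "pc_act v s1 = Some s"
    using run_cons.prems by (cases "pc_act e (strip_sharp z)") (simp_all add: pc_act_append)
  have "p \<in> Q" "length e \<le> 1"
    using edges run_cons.hyps(1) by auto
  from sharp_simulates_edge[OF run_cons.hyps(1) this e] obtain u1 z1
    where r1: "run (sharp_edges Q E) (p, True) u1 a (p1, True)"
      and z1: "pc_act u1 z = Some z1" "strip_sharp z1 = s1"
    by blast
  obtain u2 z2 where r2: "run (sharp_edges Q E) (p1, True) u2 w (q, True)"
    and z2: "pc_act u2 z1 = Some z2" "strip_sharp z2 = s"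
    using run_cons.IH[of z1] v z1(2) by blast
  have "pc_act (u1 @ u2) z = Some z2"
    using z1(1) z2(1) by (simp add: pc_act_append)
  with run_append[OF r1 r2] z2(2) show ?case by blast
qed

lemma accepts_sharp_pc_of_accepts:
  assumes edges: "\<forall>(p, u, a, q) \<in> E. p \<in> Q \<and> length u \<le> 1"
    and "F \<subseteq> Q" and "accepts pc_one E q0 F w"
  shows "accepts pc_one (sharp_edges Q E) (sharp_init q0) (sharp_finals F) w"
proof -
  obtain u q where "q \<in> F" and "run E q0 u w q" and "pc_act u (strip_sharp []) = Some []"
    using assms(3) unfolding accepts_def pc_one_iff by auto
  from sharp_simulates_run[OF edges this(2,3)] obtain u' z'
    where run: "run (sharp_edges Q E) (q0, True) u' w (q, True)"
      and "pc_act u' [] = Some z'" and "strip_sharp z' = []"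
    by blast
  define k where "k = length z'"
  with \<open>strip_sharp z' = []\<close> have z': "z' = replicate k None"
    using strip_sharp_eq_Nil by blast
  have "q \<in> Q"
    using \<open>q \<in> F\<close> \<open>F \<subseteq> Q\<close> by blast
  then have switch: "((q, True), [], [], (q, False)) \<in> sharp_edges Q E"
    unfolding sharp_edges_def by blast
  let ?v = "u' @ [] @ replicate k (Neg None)"
  have "run (sharp_edges Q E) (q0, True) ?v (w @ [] @ []) (q, False)"
    by (rule run_append[OF run
          run_append[OF run_single[OF switch] run_sharp_pop_sharps[OF \<open>q \<in> Q\<close>]]])
  moreover have "pc_act ?v [] = Some []"
    using \<open>pc_act u' [] = Some z'\<close> pc_act_pop_sharps[of k "[]"] z'
    by (simp add: pc_act_append)
  moreover have "(q, False) \<in> sharp_finals F"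
    using \<open>q \<in> F\<close> unfolding sharp_finals_def by blast
  ultimately show ?thesis
    unfolding accepts_def pc_one_iff sharp_init_def by (intro exI[of _ ?v] exI[of _ "(q, False)"]) simp
qed

section \<open>Runs of A' with label trivial in the free group\<close>

(* The letter Neg g is never cancelled by the rest of a run: the positive block t after it
   starts with # and is nonempty in + states (b = True), so it can only be emptied by the
   loops at a - state, from which A' appends a negative letter next. *)
definition blocked :: "bool \<Rightarrow> 'x option gen list \<Rightarrow> bool" where
  "blocked b r \<longleftrightarrow>
    (\<exists>r0 g t. r = r0 @ Neg g # map Pos t \<and> (t \<noteq> [] \<longrightarrow> hd t = None) \<and> (b \<longrightarrow> t \<noteq> []))"

lemma blockedI:
  "r = r0 @ Neg g # map Pos t \<Longrightarrow> (t \<noteq> [] \<Longrightarrow> hd t = None) \<Longrightarrow> (b \<Longrightarrow> t \<noteq> [])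
    \<Longrightarrow> blocked b r"
  unfolding blocked_def by blast

lemma blocked_nonempty: "blocked b r \<Longrightarrow> r \<noteq> []"
  unfolding blocked_def by auto

lemma sharp_edge_from_plus_preserves_blocked:
  assumes "(P, e, a, P') \<in> sharp_edges Q E" and "snd P" and "blocked True r"
  shows "blocked (snd P') (reduce_append r e)"
  using assms(1)
proof (cases rule: sharp_edges_cases)
  case (push p x q)
  from assms(3) obtain r0 g t where r: "r = r0 @ Neg g # map Pos t" "t \<noteq> []" "hd t = None"
    unfolding blocked_def by auto
  then have "last r = Pos (last t)"
    by (simp add: last_map)
  with push r show ?thesis
    by (intro blockedI[of _ r0 g "t @ [Some x, None]"]) (simp_all add: reduce_snoc_no_cancel)
next
  case (switch q)
  with assms(3) show ?thesis
    unfolding blocked_def by auto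
qed (use assms(2,3) in simp_all)

lemma blocked_reduce_pop:
  assumes "blocked False r"
  shows "blocked True (reduce_append r [Neg (Some x), Pos None])"
proof -
  from assms obtain r0 g t where r: "r = r0 @ Neg g # map Pos t" "t \<noteq> [] \<longrightarrow> hd t = None"
    unfolding blocked_def by auto
  show ?thesis
  proof (cases "t \<noteq> [] \<and> last t = Some x")
    case True
    then obtain t0 where t: "t = t0 @ [Some x]"
      by (metis append_butlast_last_id)
    with r have "t0 \<noteq> []" "hd t0 = None" by (cases t0; simp)+
    then have "last (r0 @ Neg g # map Pos t0) = Pos (last t0)"
      by (simp add: last_map)
    with r t \<open>t0 \<noteq> []\<close> \<open>hd t0 = None\<close> show ?thesis
      using reduce_snoc_cancel[of "Neg (Some x)" "r0 @ Neg g # map Pos t0"]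
      by (intro blockedI[of _ r0 g "t0 @ [None]"]) (simp_all add: reduce_snoc_no_cancel)
  next
    case False
    with r have "reduce_snoc (Neg (Some x)) r = r @ [Neg (Some x)]"
      by (cases t rule: rev_cases) (simp_all add: reduce_snoc_no_cancel)
    then show ?thesis
      by (intro blockedI[of _ r "Some x" "[None]"]) (simp_all add: reduce_snoc_no_cancel)
  qed
qed

lemma blocked_reduce_pop_sharp:
  assumes "blocked False r"
  shows "blocked False (reduce_snoc (Neg None) r)"
proof -
  from assms obtain r0 g t where r: "r = r0 @ Neg g # map Pos t" "t \<noteq> [] \<longrightarrow> hd t = None"
    unfolding blocked_def by auto
  show ?thesis
  proof (cases "t \<noteq> [] \<and> last t = None")
    case True
    then obtain t0 where t: "t = t0 @ [None]"
      by (metis append_butlast_last_id)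
    with r show ?thesis
      using reduce_snoc_cancel[of "Neg None" "r0 @ Neg g # map Pos t0"]
      by (intro blockedI[of _ r0 g t0]) (auto simp: hd_append split: if_splits)
  next
    case False
    with r have "reduce_snoc (Neg None) r = r @ [Neg None]"
      by (cases t rule: rev_cases) (simp_all add: reduce_snoc_no_cancel)
    then show ?thesis
      by (intro blockedI[of _ r None "[]"]) simp_all
  qed
qed

lemma sharp_edge_from_minus_preserves_blocked:
  assumes "(P, e, a, P') \<in> sharp_edges Q E" and "\<not> snd P" and "blocked False r"
  shows "blocked (snd P') (reduce_append r e)"
  using assms(1)
proof (cases rule: sharp_edges_cases)
  case (pop p x q)
  then show ?thesis
    using blocked_reduce_pop[OF assms(3)] by simp
next
  case (pop_sharp q)
  then show ?thesis
    using blocked_reduce_pop_sharp[OF assms(3)] by simp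
qed (use assms(2) in simp_all)

lemma run_sharp_preserves_blocked:
  "run (sharp_edges Q E) P u a P' \<Longrightarrow> blocked (snd P) r \<Longrightarrow> blocked (snd P') (reduce_append r u)"
proof (induction arbitrary: r rule: run.induct)
  case (run_cons P e a P1 v w P')
  have "blocked (snd P1) (reduce_append r e)"
  proof (cases "snd P")
    case True
    with run_cons.prems show ?thesis
      using sharp_edge_from_plus_preserves_blocked[OF run_cons.hyps(1)] by simp
  next
    case False
    with run_cons.prems show ?thesis
      using sharp_edge_from_minus_preserves_blocked[OF run_cons.hyps(1)] by simp
  qed
  with run_cons.IH show ?case
    by (simp add: reduce_append_append)
qed simp

lemma sharp_edge_from_plus_on_positive_word:
  assumes "(P, e, a, P') \<in> sharp_edges Q E" and "snd P"
  shows "\<exists>t' u. reduce_append (map Pos t) e = map Pos t' \<and> run E (fst P) u a (fst P')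
    \<and> pc_act u (strip_sharp t) = Some (strip_sharp t')"
  using assms(1)
proof (cases rule: sharp_edges_cases)
  case (push p x q)
  then show ?thesis
    by (intro exI[of _ "t @ [Some x, None]"] exI[of _ "[Pos x]"])
      (simp add: run_single reduce_snoc_Pos_map_Pos reduce_snoc_no_cancel)
next
  case (silent p q)
  then show ?thesis
    by (intro exI[of _ t] exI[of _ "[]"]) (simp add: run_single)
next
  case (switch q)
  then show ?thesis
    by (intro exI[of _ t] exI[of _ "[]"]) (simp add: run_nil)
qed (use assms(2) in simp_all)

lemma sharp_edge_from_minus_on_positive_word:
  assumes "(P, e, a, P') \<in> sharp_edges Q E" and "\<not> snd P"
  shows "blocked (snd P') (reduce_append (map Pos t) e)
    \<or> (\<exists>t' u. reduce_append (map Pos t) e = map Pos t' \<and> run E (fst P) u a (fst P')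
        \<and> pc_act u (strip_sharp t) = Some (strip_sharp t'))"
  using assms(1)
proof (cases rule: sharp_edges_cases)
  case (pop p x q)
  show ?thesis
  proof (cases "t \<noteq> [] \<and> last t = Some x")
    case True
    then obtain t0 where t: "t = t0 @ [Some x]"
      by (metis append_butlast_last_id)
    with pop show ?thesis
      using reduce_snoc_cancel[of "Neg (Some x)" "map Pos t0"]
      by (intro disjI2 exI[of _ "t0 @ [None]"] exI[of _ "[Neg x]"])
        (simp add: run_single reduce_snoc_Pos_map_Pos)
  next
    case False
    with pop show ?thesis
      by (intro disjI1 blockedI[of _ "map Pos t" "Some x" "[None]"])
        (auto simp: reduce_snoc_Neg_map_Pos reduce_snoc_no_cancel)
  qed
next
  case (pop_sharp q)
  show ?thesis
  proof (cases "t \<noteq> [] \<and> last t = None")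
    case True
    then obtain t0 where t: "t = t0 @ [None]"
      by (metis append_butlast_last_id)
    with pop_sharp show ?thesis
      using reduce_snoc_cancel[of "Neg None" "map Pos t0"]
      by (intro disjI2 exI[of _ t0] exI[of _ "[]"]) (simp add: run_nil)
  next
    case False
    with pop_sharp show ?thesis
      by (intro disjI1 blockedI[of _ "map Pos t" None "[]"]) (auto simp: reduce_snoc_Neg_map_Pos)
  qed
qed (use assms(2) in simp_all)

lemma run_of_run_sharp:
  "run (sharp_edges Q E) P v a P' \<Longrightarrow> reduce_append (map Pos t) v = []
    \<Longrightarrow> \<exists>u. run E (fst P) u a (fst P') \<and> pc_act u (strip_sharp t) = Some []"
proof (induction arbitrary: t rule: run.induct)
  case (run_nil P)
  then show ?case using run.run_nil by fastforce
next
  case (run_cons P e a P1 v w P')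
  have rest: "reduce_append (reduce_append (map Pos t) e) v = []"
    using run_cons.prems by (simp add: reduce_append_append)
  have "\<not> blocked (snd P1) (reduce_append (map Pos t) e)"
    using run_sharp_preserves_blocked[OF run_cons.hyps(2)] blocked_nonempty rest by metis
  then obtain t' u1 where t': "reduce_append (map Pos t) e = map Pos t'"
    and u1: "run E (fst P) u1 a (fst P1)" "pc_act u1 (strip_sharp t) = Some (strip_sharp t')"
    using sharp_edge_from_plus_on_positive_word[OF run_cons.hyps(1), of t]
      sharp_edge_from_minus_on_positive_word[OF run_cons.hyps(1), of t]
    by (cases "snd P") auto
  obtain u2 where u2: "run E (fst P1) u2 w (fst P')" "pc_act u2 (strip_sharp t') = Some []"
    using run_cons.IH[of t'] rest t' by auto
  have "pc_act (u1 @ u2) (strip_sharp t) = Some []"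
    using u1(2) u2(2) by (simp add: pc_act_append)
  with run_append[OF u1(1) u2(1)] show ?case by blast
qed

lemma accepts_of_accepts_sharp_fg:
  assumes "accepts fg_one (sharp_edges Q E) (sharp_init q0) (sharp_finals F) w"
  shows "accepts pc_one E q0 F w"
proof -
  obtain v q where "q \<in> F" and run: "run (sharp_edges Q E) (q0, True) v w (q, False)"
    and "fg_one v"
    using assms unfolding accepts_def sharp_init_def sharp_finals_def by blast
  from \<open>fg_one v\<close> have "reduce_append (map Pos []) v = []"
    by (simp add: fg_one_reduce_append)
  from run_of_run_sharp[OF run this] obtain u where "run E q0 u w q" "pc_act u [] = Some []"
    by auto
  with \<open>q \<in> F\<close> show ?thesis
    unfolding accepts_def pc_one_iff by blast
qed

theorem theorem4p3:
  fixes Q :: "'q set" and E :: "('q \<times> 'x::finite gen list \<times> 's::finite list \<times> 'q) set"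
    and q0 :: 'q and F :: "'q set" and L :: "'s list set"
  assumes "finite Q" and "finite E"
    and "q0 \<in> Q" and "F \<subseteq> Q"
    and "\<forall>(p, u, a, q) \<in> E. p \<in> Q \<and> q \<in> Q \<and> length u \<le> 1 \<and> length a \<le> 1"
    and "L = {w. accepts pc_one E q0 F w}"
  shows "{w. accepts fg_one (sharp_edges Q E) (sharp_init q0) (sharp_finals F) w} = L
       \<and> {w. accepts pc_one (sharp_edges Q E) (sharp_init q0) (sharp_finals F) w} = L"
proof -
  let ?L_F = "{w. accepts fg_one (sharp_edges Q E) (sharp_init q0) (sharp_finals F) w}"
  let ?L_P = "{w. accepts pc_one (sharp_edges Q E) (sharp_init q0) (sharp_finals F) w}"
  have edges: "\<forall>(p, u, a, q) \<in> E. p \<in> Q \<and> length u \<le> 1"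
    using assms(5) by auto
  have "L \<subseteq> ?L_P"
    unfolding assms(6) by (intro Collect_mono impI accepts_sharp_pc_of_accepts[OF edges assms(4)])
  moreover have "?L_P \<subseteq> ?L_F"
    by (intro Collect_mono impI accepts_mono[OF predicate1I[OF pc_one_imp_fg_one]])
  moreover have "?L_F \<subseteq> L"
    unfolding assms(6) by (intro Collect_mono impI accepts_of_accepts_sharp_fg)
  ultimately show ?thesis by blast
qed

end
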